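(* Let $(\tilde\theta_n)_{n\ge0}$ be a sequence in $(0,\infty)^d$ satisfying, for some sequence $(X_n)_{n\ge1}$ in $\mathsf X$ and some sequence $(\gamma_n)_{n\ge1}$ of positive stepsizes, the recurrence $\tilde\theta_{n+1}(i)=\tilde\theta_n(i)\big(1+\gamma_{n+1}\frac{\rho(\theta_n(i))}{\theta_n(i)}\mathbf 1_{\mathsf X_i}(X_{n+1})\big)$ for all $i$ and $n\ge0$, where $\theta_n=\tilde\theta_n/\sum_{j=1}^d\tilde\theta_n(j)$. Then $$\theta_{n+1}=\theta_n+\gamma_{n+1}H(X_{n+1},\theta_n)+\gamma_{n+1}\Lambda_{n+1},$$ where $(\Lambda_n)_{n\ge1}$ is an $\mathbb R^d$-valued sequence satisfying $\sup_{n\ge0}\frac{|\Lambda_{n+1}|}{\gamma_{n+1}}\le\sqrt2\,\big(\sup_{(0,1)}\rho\big)^2$ (almost surely, when the sequences are random).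
   Context: $\mathsf X$ is a set partitioned into disjoint measurable strata $\mathsf X_1,\dots,\mathsf X_d$, with $I(x)=i$ iff $x\in\mathsf X_i$; $\Theta=\{\theta\in(0,1)^d:\sum_i\theta(i)=1\}$; $\rho:(0,1)\to(0,\infty)$ is measurable. The function $H:\mathsf X\times\Theta\to\mathbb R^d$ has components $H_i(x,\theta)=\rho(\theta(i))\mathbf 1_{\mathsf X_i}(x)-\theta(i)\rho(\theta(I(x)))$. $|\cdot|$ is the Euclidean norm. *)

theory Defs
  imports "HOL-Analysis.Analysis"
begin

text \<open>Strata are indexed by a finite type 'd; the stratum map I sends x to the
index of the stratum containing it, so the strata are the fibres of I
(a partition of the ground type into disjoint pieces).\<close>

definition stratum :: "('x \<Rightarrow> 'd) \<Rightarrow> 'd \<Rightarrow> 'x set" where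
  "stratum I i = {x. I x = i}"

definition normalize :: "real ^ 'd::finite \<Rightarrow> real ^ 'd" where
  "normalize v = (\<chi> i. v $ i / (\<Sum>j\<in>UNIV. v $ j))"

definition Hfun :: "('x \<Rightarrow> 'd::finite) \<Rightarrow> (real \<Rightarrow> real) \<Rightarrow> 'x \<Rightarrow> real ^ 'd \<Rightarrow> real ^ 'd" where
  "Hfun I \<rho> x \<theta> = (\<chi> i. \<rho> (\<theta> $ i) * indicator (stratum I i) x - \<theta> $ i * \<rho> (\<theta> $ (I x)))"

end

theory Submission imports Defs begin

text \<open>With \<open>k = I x\<close>, \<open>r = \<rho>(\<theta>(k))\<close> and \<open>S = \<Sum>\<^sub>j t(j)\<close>, the recurrence
only adds \<open>\<gamma> r S\<close> to coordinate \<open>k\<close>, so the normalised vector moves exactly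
to \<open>(\<theta> + \<gamma> r e\<^sub>k) / (1 + \<gamma> r)\<close>.  As \<open>H(x, \<theta>) = r (e\<^sub>k - \<theta>)\<close>, the
remainder is \<open>\<Lambda> = -(\<gamma> r\<^sup>2 / (1 + \<gamma> r)) (e\<^sub>k - \<theta>)\<close>, so
\<open>|\<Lambda>| / \<gamma> \<le> r\<^sup>2 |e\<^sub>k - \<theta>|\<close>, and \<open>|e\<^sub>k - \<theta>| \<le> \<surd>2\<close> on the simplex.\<close>

lemma normalize_eq_scaleR: "normalize v = (1 / (\<Sum>j\<in>UNIV. v $ j)) *\<^sub>R v"
  by (simp add: normalize_def vec_eq_iff)

lemma normalize_pos:
  fixes v :: "real ^ 'd::finite"
  assumes "\<forall>i. v $ i > 0"
  shows "normalize v $ i > 0"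
  using assms by (simp add: normalize_def sum_pos)

lemma sum_normalize:
  fixes v :: "real ^ 'd::finite"
  assumes "(\<Sum>j\<in>UNIV. v $ j) \<noteq> 0"
  shows "(\<Sum>i\<in>UNIV. normalize v $ i) = 1"
  using assms by (simp add: normalize_def sum_divide_distrib[symmetric])

lemma sum_add_axis: "(\<Sum>j\<in>UNIV. (v + c *\<^sub>R axis k 1) $ j) = (\<Sum>j\<in>UNIV. v $ j) + (c::real)"
  by (simp add: sum.distrib axis_def if_distrib[of "\<lambda>y. _ * y"] cong: if_cong)

lemma normalize_add_axis:
  fixes v :: "real ^ 'd::finite"
  assumes "(\<Sum>j\<in>UNIV. v $ j) \<noteq> 0" and "1 + c \<noteq> 0"
  shows "normalize (v + (c * (\<Sum>j\<in>UNIV. v $ j)) *\<^sub>R axis k 1)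
           = (1 / (1 + c)) *\<^sub>R (normalize v + c *\<^sub>R axis k 1)"
proof -
  define S where "S = (\<Sum>j\<in>UNIV. v $ j)"
  have "(\<Sum>j\<in>UNIV. (v + (c * S) *\<^sub>R axis k 1) $ j) = S * (1 + c)"
    unfolding sum_add_axis by (simp add: S_def algebra_simps)
  moreover have "S \<noteq> 0" "1 + c \<noteq> 0"
    using assms by (simp_all add: S_def)
  ultimately have "normalize (v + (c * S) *\<^sub>R axis k 1)
      = (1 / (S * (1 + c))) *\<^sub>R (v + (c * S) *\<^sub>R axis k 1)"
    by (simp add: normalize_eq_scaleR)
  also have "\<dots> = (1 / (1 + c)) *\<^sub>R ((1 / S) *\<^sub>R v + c *\<^sub>R axis k 1)"
    using \<open>S \<noteq> 0\<close> by (simp add: scaleR_add_right)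
  finally show ?thesis
    by (simp add: S_def normalize_eq_scaleR)
qed

lemma Hfun_eq_scaleR_axis: "Hfun I \<rho> x \<theta> = \<rho> (\<theta> $ I x) *\<^sub>R (axis (I x) 1 - \<theta>)"
  by (auto simp: vec_eq_iff Hfun_def axis_def indicator_def stratum_def algebra_simps)

lemma norm_axis_minus_simplex:
  fixes \<theta> :: "real ^ 'd::finite"
  assumes nonneg: "\<forall>i. \<theta> $ i \<ge> 0" and sum_one: "(\<Sum>i\<in>UNIV. \<theta> $ i) = 1"
  shows "norm (axis k 1 - \<theta>) \<le> sqrt 2 * (1 - \<theta> $ k)"
proof -
  let ?w = "\<lambda>i. norm ((axis k 1 - \<theta>) $ i)"
  have rest: "(\<Sum>i\<in>UNIV - {k}. \<theta> $ i) = 1 - \<theta> $ k"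
    using sum_one sum.remove[of UNIV k "\<lambda>i. \<theta> $ i"] by simp
  have "L2_set ?w (UNIV - {k}) \<le> (\<Sum>i\<in>UNIV - {k}. \<bar>?w i\<bar>)"
    by (rule L2_set_le_sum_abs)
  also have "\<dots> = 1 - \<theta> $ k"
    using nonneg rest by (simp add: axis_def)
  finally have tail: "(L2_set ?w (UNIV - {k}))\<^sup>2 \<le> (1 - \<theta> $ k)\<^sup>2"
    by (simp add: L2_set_nonneg power_mono)
  have "norm (axis k 1 - \<theta>) = L2_set ?w (insert k (UNIV - {k}))"
    by (simp add: norm_vec_def insert_absorb)
  also have "\<dots> = sqrt ((1 - \<theta> $ k)\<^sup>2 + (L2_set ?w (UNIV - {k}))\<^sup>2)"
    by (subst L2_set_insert) (auto simp: axis_def)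
  also have "\<dots> \<le> sqrt (2 * (1 - \<theta> $ k)\<^sup>2)"
    using tail by simp
  also have "\<dots> = sqrt 2 * (1 - \<theta> $ k)"
    using nonneg rest sum_nonneg by (metis (no_types, lifting) real_sqrt_mult real_sqrt_abs abs_of_nonneg)
  finally show ?thesis .
qed

definition stratified_remainder ::
    "('x \<Rightarrow> 'd::finite) \<Rightarrow> (real \<Rightarrow> real) \<Rightarrow> real \<Rightarrow> 'x \<Rightarrow> real ^ 'd \<Rightarrow> real ^ 'd"
  where "stratified_remainder I \<rho> g x \<theta> =
    (- (g * (\<rho> (\<theta> $ I x))\<^sup>2 / (1 + g * \<rho> (\<theta> $ I x)))) *\<^sub>R (axis (I x) 1 - \<theta>)"

lemma normalize_stratified_step:
  fixes I :: "'x \<Rightarrow> 'd::finite" and t t' :: "real ^ 'd"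
  assumes t_pos: "\<forall>i. t $ i > 0" and t'_pos: "\<forall>i. t' $ i > 0"
    and recur: "\<forall>i. t' $ i = t $ i * (1 + g * (\<rho> (normalize t $ i) / normalize t $ i)
                                         * indicator (stratum I i) x)"
  shows "normalize t' = normalize t + g *\<^sub>R Hfun I \<rho> x (normalize t)
                          + g *\<^sub>R stratified_remainder I \<rho> g x (normalize t)"
proof -
  define S where "S = (\<Sum>j\<in>UNIV. t $ j)"
  define \<theta> where "\<theta> = normalize t"
  define k where "k = I x"
  define r where "r = \<rho> (\<theta> $ k)"
  have S_pos: "S > 0"
    using t_pos by (simp add: S_def sum_pos)
  have t'_eq: "t' = t + (g * r * S) *\<^sub>R axis k 1"
  proof (rule vec_eq_iff[THEN iffD2], intro allI)
    fix i
    have "t $ i \<noteq> 0" using t_pos by (metis less_irrefl)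
    then show "t' $ i = (t + (g * r * S) *\<^sub>R axis k 1) $ i"
      using recur S_pos
      by (auto simp: \<theta>_def r_def k_def S_def normalize_def axis_def indicator_def stratum_def field_simps)
  qed
  have "0 < (\<Sum>j\<in>UNIV. t' $ j)"
    using t'_pos by (simp add: sum_pos)
  also have "\<dots> = S * (1 + g * r)"
    unfolding t'_eq sum_add_axis by (simp add: S_def algebra_simps)
  finally have "1 + g * r \<noteq> 0"
    by auto
  then have "normalize t' = (1 / (1 + g * r)) *\<^sub>R (\<theta> + (g * r) *\<^sub>R axis k 1)"
    using S_pos normalize_add_axis[of t "g * r" k]
    by (simp add: t'_eq \<theta>_def S_def mult.assoc)
  also have "\<dots> = \<theta> + g *\<^sub>R Hfun I \<rho> x \<theta> + g *\<^sub>R stratified_remainder I \<rho> g x \<theta>"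
    using \<open>1 + g * r \<noteq> 0\<close>
    by (simp add: vec_eq_iff Hfun_eq_scaleR_axis stratified_remainder_def axis_def r_def k_def
        power2_eq_square field_simps)
  finally show ?thesis
    by (simp add: \<theta>_def)
qed

lemma norm_stratified_remainder_le:
  fixes \<theta> :: "real ^ 'd::finite"
  assumes pos: "\<forall>i. \<theta> $ i > 0" and sum_one: "(\<Sum>i\<in>UNIV. \<theta> $ i) = 1" and "g > 0"
    and rho_pos: "\<forall>t\<in>{0<..<1}. \<rho> t > 0" and rho_le: "\<forall>t\<in>{0<..<1}. \<rho> t \<le> M"
  shows "norm (stratified_remainder I \<rho> g x \<theta>) / g \<le> sqrt 2 * M\<^sup>2"
proof -
  define k where "k = I x"
  define r where "r = \<rho> (\<theta> $ k)"
  have norm_w: "norm (axis k 1 - \<theta>) \<le> sqrt 2 * (1 - \<theta> $ k)"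
    using pos sum_one by (intro norm_axis_minus_simplex) (auto simp: less_imp_le)
  show ?thesis
  proof (cases "\<theta> $ k < 1")
    case True
    then have r: "0 < r" "r \<le> M"
      using pos rho_pos rho_le by (auto simp: r_def)
    have "norm (stratified_remainder I \<rho> g x \<theta>) / g = r\<^sup>2 / (1 + g * r) * norm (axis k 1 - \<theta>)"
      using \<open>g > 0\<close> r by (simp add: stratified_remainder_def r_def k_def)
    also have "\<dots> \<le> r\<^sup>2 * sqrt 2"
    proof (rule mult_mono)
      show "r\<^sup>2 / (1 + g * r) \<le> r\<^sup>2"
        using \<open>g > 0\<close> r by (simp add: divide_le_eq)
      show "norm (axis k 1 - \<theta>) \<le> sqrt 2"
        using norm_w pos[rule_format, of k] by (smt (verit) mult_left_le real_sqrt_ge_zero)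
    qed auto
    also have "\<dots> \<le> sqrt 2 * M\<^sup>2"
      using r by (simp add: mult.commute power_mono)
    finally show ?thesis .
  next
    case False
    \<comment> \<open>\<open>\<rho>(1)\<close> is unconstrained, but \<open>\<theta>(k) = 1\<close> forces \<open>\<theta> = e\<^sub>k\<close>.\<close>
    then have "axis k 1 - \<theta> = 0"
      using norm_w by (smt (verit) mult_nonneg_nonpos norm_le_zero_iff real_sqrt_ge_zero)
    then show ?thesis
      by (simp add: stratified_remainder_def k_def)
  qed
qed

theorem lemma3p2:
  fixes I :: "'x \<Rightarrow> 'd::finite"
    and \<rho> :: "real \<Rightarrow> real"
    and \<theta>t :: "nat \<Rightarrow> real ^ 'd"
    and X :: "nat \<Rightarrow> 'x"
    and \<gamma> :: "nat \<Rightarrow> real"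
  assumes rho_pos: "\<forall>t\<in>{0<..<1}. \<rho> t > 0"
    and theta_pos: "\<forall>n i. \<theta>t n $ i > 0"
    and gamma_pos: "\<forall>n. \<gamma> (Suc n) > 0"
    and recur: "\<forall>n i. \<theta>t (Suc n) $ i =
        \<theta>t n $ i * (1 + \<gamma> (Suc n) * (\<rho> (normalize (\<theta>t n) $ i) / normalize (\<theta>t n) $ i)
                        * indicator (stratum I i) (X (Suc n)))"
  shows "\<exists>\<Lambda> :: nat \<Rightarrow> real ^ 'd.
           (\<forall>n. normalize (\<theta>t (Suc n)) = normalize (\<theta>t n)
                  + \<gamma> (Suc n) *\<^sub>R Hfun I \<rho> (X (Suc n)) (normalize (\<theta>t n))
                  + \<gamma> (Suc n) *\<^sub>R \<Lambda> (Suc n))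
         \<and> (\<forall>M. (\<forall>t\<in>{0<..<1}. \<rho> t \<le> M) \<longrightarrow>
                (\<forall>n. norm (\<Lambda> (Suc n)) / \<gamma> (Suc n) \<le> sqrt 2 * M\<^sup>2))"
proof (intro exI conjI allI impI)
  define \<Lambda> where "\<Lambda> m = stratified_remainder I \<rho> (\<gamma> m) (X m) (normalize (\<theta>t (m - 1)))" for m
  fix n
  show "normalize (\<theta>t (Suc n)) = normalize (\<theta>t n)
          + \<gamma> (Suc n) *\<^sub>R Hfun I \<rho> (X (Suc n)) (normalize (\<theta>t n)) + \<gamma> (Suc n) *\<^sub>R \<Lambda> (Suc n)"
    unfolding \<Lambda>_def diff_Suc_1
    by (rule normalize_stratified_step) (use theta_pos recur in blast)+
  fix M n
  assume "\<forall>t\<in>{0<..<1}. \<rho> t \<le> M"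
  moreover have "\<forall>i. normalize (\<theta>t n) $ i > 0" "(\<Sum>i\<in>UNIV. normalize (\<theta>t n) $ i) = 1"
    using theta_pos by (simp_all add: normalize_pos sum_normalize sum_pos less_imp_neq[symmetric])
  ultimately show "norm (\<Lambda> (Suc n)) / \<gamma> (Suc n) \<le> sqrt 2 * M\<^sup>2"
    unfolding \<Lambda>_def using gamma_pos rho_pos by (simp add: norm_stratified_remainder_le)
qed

end
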